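(* Let $(x_n,y_n)_{n\in\mathbb Z}$ and $(x'_n,y'_n)_{n\in\mathbb Z}$ be two elliptic sequences in general position on the same biquadratic polynomial $F$. For integers $m\ge1$, $r,s$, let $Q_{m,r,s}(y)=\dfrac{(y-y_r)\cdots(y-y_{r+m-1})}{(y-y'_s)\cdots(y-y'_{s+m-1})}$. Then there exist a constant $C^\dagger_{m,r,s}$ and a polynomial $D^\dagger_{m,r,s}$ of degree at most $2$ such that, as rational functions of $x$, $$\mathcal D^\dagger Q_{m,r,s}(x)=C^\dagger_{m,r,s}X_2(x)\frac{(x-x_{r+1})\cdots(x-x_{r+m-1})}{(x-x'_s)(x-x'_{s+1})\cdots(x-x'_{s+m})},\qquad \mathcal M^\dagger Q_{m,r,s}(x)=D^\dagger_{m,r,s}(x)\frac{(x-x_{r+1})\cdots(x-x_{r+m-1})}{(x-x'_s)\cdots(x-x'_{s+m})}.$$ Moreover $C^\dagger_{1,r,s}=\dfrac{y'_s-y_r}{Y_2(y'_s)}$ and $D^\dagger_{1,r,s}(x)=\dfrac{X_0(x)+(y_r+y'_s)X_1(x)/2+y_ry'_sX_2(x)}{Y_2(y'_s)}$.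
   Context: $F(x,y)=\sum_{i,j=0}^2c_{i,j}x^iy^j=Y_0(y)+xY_1(y)+x^2Y_2(y)=X_0(x)+yX_1(x)+y^2X_2(x)$. An elliptic sequence on $F$ is $(x_n,y_n)_{n\in\mathbb Z}$ such that for every $n$, $x_n,x_{n+1}$ are the two roots of $F(\cdot,y_n)$ and $y_{n-1},y_n$ the two roots of $F(x_n,\cdot)$; general position: all $x_n,x'_n$ distinct, all $y_n,y'_n$ distinct, $X_2,Y_2$ nonvanishing there. For a rational function $g$ of $y$ and a value $x$ with $y^\pm$ the two roots of $F(x,y)=0$: $(\mathcal D^\dagger g)(x)=-\frac{g(y^+)-g(y^-)}{y^+-y^-}$, $(\mathcal M^\dagger g)(x)=\frac{g(y^+)+g(y^-)}2$; on the lattice $(\mathcal D^\dagger g)(x_n)=-\frac{g(y_n)-g(y_{n-1})}{y_n-y_{n-1}}$, $(\mathcal M^\dagger g)(x_n)=\frac{g(y_n)+g(y_{n-1})}2$. Empty products equal $1$. *)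

theory Defs
  imports Complex_Main "HOL-Computational_Algebra.Polynomial"
begin

definition bqF :: "(nat \<Rightarrow> nat \<Rightarrow> complex) \<Rightarrow> complex \<Rightarrow> complex \<Rightarrow> complex" where
  "bqF c x y = (\<Sum>i\<le>2. \<Sum>j\<le>2. c i j * x ^ i * y ^ j)"

definition bqX :: "(nat \<Rightarrow> nat \<Rightarrow> complex) \<Rightarrow> nat \<Rightarrow> complex \<Rightarrow> complex" where
  "bqX c j x = (\<Sum>i\<le>2. c i j * x ^ i)"

definition bqY :: "(nat \<Rightarrow> nat \<Rightarrow> complex) \<Rightarrow> nat \<Rightarrow> complex \<Rightarrow> complex" where
  "bqY c i y = (\<Sum>j\<le>2. c i j * y ^ j)"

text \<open>Elliptic sequence: x_n, x_{n+1} are the two roots (with multiplicity) of F(.,y_n),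
  and y_{n-1}, y_n are the two roots of F(x_n,.).\<close>
definition elliptic_seq ::
  "(nat \<Rightarrow> nat \<Rightarrow> complex) \<Rightarrow> (int \<Rightarrow> complex) \<Rightarrow> (int \<Rightarrow> complex) \<Rightarrow> bool" where
  "elliptic_seq c xs ys \<longleftrightarrow>
     (\<forall>n. \<forall>t. bqF c t (ys n) = bqY c 2 (ys n) * (t - xs n) * (t - xs (n + 1))) \<and>
     (\<forall>n. \<forall>t. bqF c (xs n) t = bqX c 2 (xs n) * (t - ys (n - 1)) * (t - ys n))"

definition general_position ::
  "(nat \<Rightarrow> nat \<Rightarrow> complex) \<Rightarrow> (int \<Rightarrow> complex) \<Rightarrow> (int \<Rightarrow> complex)
     \<Rightarrow> (int \<Rightarrow> complex) \<Rightarrow> (int \<Rightarrow> complex) \<Rightarrow> bool" where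
  "general_position c xs ys xs' ys' \<longleftrightarrow>
     inj xs \<and> inj xs' \<and> (\<forall>n m. xs n \<noteq> xs' m) \<and>
     inj ys \<and> inj ys' \<and> (\<forall>n m. ys n \<noteq> ys' m) \<and>
     (\<forall>n. bqX c 2 (xs n) \<noteq> 0 \<and> bqX c 2 (xs' n) \<noteq> 0) \<and>
     (\<forall>n. bqY c 2 (ys n) \<noteq> 0 \<and> bqY c 2 (ys' n) \<noteq> 0)"

text \<open>The operators D-dagger and M-dagger applied to g at a point x whose two roots
  F(x,.) are yp, ym.\<close>
definition Ddag :: "(complex \<Rightarrow> complex) \<Rightarrow> complex \<Rightarrow> complex \<Rightarrow> complex" where
  "Ddag g yp ym = - (g yp - g ym) / (yp - ym)"

definition Mdag :: "(complex \<Rightarrow> complex) \<Rightarrow> complex \<Rightarrow> complex \<Rightarrow> complex" where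
  "Mdag g yp ym = (g yp + g ym) / 2"

definition Qfun :: "(int \<Rightarrow> complex) \<Rightarrow> (int \<Rightarrow> complex) \<Rightarrow> nat \<Rightarrow> int \<Rightarrow> int \<Rightarrow> complex \<Rightarrow> complex" where
  "Qfun ys ys' m r s y = (\<Prod>k<m. (y - ys (r + int k))) / (\<Prod>k<m. (y - ys' (s + int k)))"

end

theory Submission
  imports Defs
begin

text \<open>By partial fractions, Q(y) = 1 + sum_k A_k / (y - y'_{s+k}). If F(x, y) = X_2(x) (y - y+) (y - y-),
  a simple pole gives D^dagger(1/(y - w)) = X_2(x) / F(x, w) and
  M^dagger(1/(y - w)) = - F_y(x, w) / (2 F(x, w)), while the second sequence factors
  F(x, y'_n) = Y_2(y'_n) (x - x'_n) (x - x'_{n+1}). Over the common denominator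
  prod_{k <= m} (x - x'_{s+k}) this writes D^dagger Q = X_2 U / ... and M^dagger Q = V / ... with
  deg U <= m - 1 and deg V <= m + 1. At x = x_{r+j}, 1 <= j < m, the roots of F(x, .) are
  y_{r+j-1} and y_{r+j}, both zeros of Q; so U and V vanish at these m - 1 distinct points, and
  dividing by prod_j (x - x_{r+j}) leaves a constant C and a polynomial D of degree at most 2.\<close>

lemma degree_prod_linear:
  fixes z :: "'b \<Rightarrow> 'a::idom"
  shows "degree (\<Prod>k\<in>K. [:- z k, 1:]) = card K"
proof (cases "finite K")
  case True
  then have "degree (\<Prod>k\<in>K. [:- z k, 1:]) = (\<Sum>k\<in>K. degree [:- z k, 1:])"
    by (intro degree_prod_eq_sum_degree) auto
  then show ?thesis by simp
qed simp

lemma coeff_prod_linear_card: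
  fixes z :: "'b \<Rightarrow> 'a::idom"
  shows "coeff (\<Prod>k\<in>K. [:- z k, 1:]) (card K) = 1"
  using lead_coeff_prod[of "\<lambda>k. [:- z k, 1:]" K] by (simp add: degree_prod_linear)

lemma prod_linear_dvd:
  fixes z :: "'b \<Rightarrow> 'a::idom"
  assumes "finite K" "inj_on z K" "\<forall>k\<in>K. poly p (z k) = 0"
  shows "(\<Prod>k\<in>K. [:- z k, 1:]) dvd p"
  using assms
proof (induction K rule: finite_induct)
  case (insert a K)
  then obtain q where q: "p = (\<Prod>k\<in>K. [:- z k, 1:]) * q"
    by (auto elim!: dvdE)
  have "poly (\<Prod>k\<in>K. [:- z k, 1:]) (z a) \<noteq> 0"
    using insert.hyps insert.prems(1) by (auto simp: poly_prod)
  with insert.prems(2) q have "poly q (z a) = 0" by simp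
  then have "[:- z a, 1:] dvd q" by (simp add: poly_eq_0_iff_dvd)
  then have "(\<Prod>k\<in>K. [:- z k, 1:]) * [:- z a, 1:] dvd p"
    unfolding q by (rule mult_dvd_mono[OF dvd_refl])
  then show ?case using insert.hyps by (simp add: mult.commute)
qed simp

lemma prod_linear_factor:
  fixes z :: "'b \<Rightarrow> 'a::idom"
  assumes "finite K" "inj_on z K" "\<forall>k\<in>K. poly p (z k) = 0"
  obtains q where "p = (\<Prod>k\<in>K. [:- z k, 1:]) * q" "degree q = degree p - card K"
proof -
  obtain q where q: "p = (\<Prod>k\<in>K. [:- z k, 1:]) * q"
    using prod_linear_dvd[OF assms] by (auto elim!: dvdE)
  have "(\<Prod>k\<in>K. [:- z k, 1:]) \<noteq> 0" using assms(1) by (simp add: prod_zero_iff)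
  then have "degree q = degree p - card K"
    by (cases "q = 0") (simp_all add: q degree_mult_eq degree_prod_linear)
  with q show thesis by (rule that)
qed

definition pfrac_coeff :: "('b \<Rightarrow> 'a::field) \<Rightarrow> ('b \<Rightarrow> 'a) \<Rightarrow> 'b set \<Rightarrow> 'b \<Rightarrow> 'a" where
  "pfrac_coeff u w K k = (\<Prod>j\<in>K. (w k - u j)) / (\<Prod>j\<in>K - {k}. (w k - w j))"

lemma prod_linear_interpolation:
  fixes u w :: "'b \<Rightarrow> 'a::field"
  assumes K: "finite K" and w: "inj_on w K"
  shows "(\<Prod>k\<in>K. [:- u k, 1:]) = (\<Prod>k\<in>K. [:- w k, 1:])
           + (\<Sum>k\<in>K. smult (pfrac_coeff u w K k) (\<Prod>j\<in>K - {k}. [:- w j, 1:]))"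
    (is "?P = ?W + ?S")
proof (rule poly_eqI_degree_lead_coeff[where n = "card K" and A = "w ` K"])
  have dS: "degree ?S < card K" if "K \<noteq> {}"
  proof -
    have "degree ?S \<le> card K - 1"
      using K by (intro degree_sum_le) (auto intro: order.trans[OF degree_smult_le] simp: degree_prod_linear)
    moreover have "card K > 0" using K that by (simp add: card_gt_0_iff)
    ultimately show ?thesis by linarith
  qed
  then have "coeff ?S (card K) = 0"
    by (cases "K = {}") (simp_all add: coeff_eq_0)
  then show "coeff ?P (card K) = coeff (?W + ?S) (card K)"
    by (simp add: coeff_prod_linear_card)
  show "card K \<le> card (w ` K)" using w by (simp add: card_image)
  show "degree ?P \<le> card K" by (simp add: degree_prod_linear)
  show "degree (?W + ?S) \<le> card K"
    using dS by (cases "K = {}") (auto intro: degree_add_le simp: degree_prod_linear)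
next
  fix x assume "x \<in> w ` K"
  then obtain i where i: "i \<in> K" "x = w i" by auto
  have "poly ?S x = (\<Sum>k\<in>K. pfrac_coeff u w K k * poly (\<Prod>j\<in>K - {k}. [:- w j, 1:]) x)"
    by (simp add: poly_sum)
  also have "\<dots> = pfrac_coeff u w K i * poly (\<Prod>j\<in>K - {i}. [:- w j, 1:]) x
                   + (\<Sum>k\<in>K - {i}. pfrac_coeff u w K k * poly (\<Prod>j\<in>K - {k}. [:- w j, 1:]) x)"
    using K i by (simp add: sum.remove)
  also have "(\<Sum>k\<in>K - {i}. pfrac_coeff u w K k * poly (\<Prod>j\<in>K - {k}. [:- w j, 1:]) x) = 0"
    using K i by (intro sum.neutral) (auto simp: poly_prod)
  also have "pfrac_coeff u w K i * poly (\<Prod>j\<in>K - {i}. [:- w j, 1:]) x = poly ?P x"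
  proof -
    have "(\<Prod>j\<in>K - {i}. (w i - w j)) \<noteq> 0"
      using K w i by (simp add: inj_on_def) blast
    then show ?thesis using i by (simp add: pfrac_coeff_def poly_prod)
  qed
  moreover have "poly ?W x = 0"
    using K i by (auto simp: poly_prod)
  ultimately show "poly ?P x = poly (?W + ?S) x" by simp
qed

lemma prod_ratio_partial_fractions:
  fixes u w :: "'b \<Rightarrow> 'a::field"
  assumes K: "finite K" and w: "inj_on w K" and y: "\<forall>k\<in>K. y \<noteq> w k"
  shows "(\<Prod>k\<in>K. (y - u k)) / (\<Prod>k\<in>K. (y - w k))
           = 1 + (\<Sum>k\<in>K. pfrac_coeff u w K k / (y - w k))"
proof -
  define W where "W = (\<Prod>k\<in>K. (y - w k))"
  have W0: "W \<noteq> 0" unfolding W_def using K y by simp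
  have W_split: "W = (y - w k) * (\<Prod>j\<in>K - {k}. (y - w j))" if "k \<in> K" for k
    unfolding W_def using K that by (simp add: prod.remove)
  have "(\<Prod>k\<in>K. (y - u k)) = W + (\<Sum>k\<in>K. pfrac_coeff u w K k * (\<Prod>j\<in>K - {k}. (y - w j)))"
    using arg_cong[OF prod_linear_interpolation[OF K w, of u], of "\<lambda>p. poly p y"]
    by (simp add: W_def poly_prod poly_sum)
  also have "\<dots> = W * (1 + (\<Sum>k\<in>K. pfrac_coeff u w K k / (y - w k)))"
    using W0 by (auto simp: distrib_left sum_distrib_left W_split intro!: sum.cong)
  finally show ?thesis using W0 by (simp add: W_def)
qed

lemma bqF_eq_bqX: "bqF c x t = bqX c 0 x + t * bqX c 1 x + t\<^sup>2 * bqX c 2 x"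
  unfolding bqF_def bqX_def by (simp add: eval_nat_numeral atMost_Suc algebra_simps)

lemma bqX_1_eq_root_sum:
  assumes "\<forall>t. bqF c x t = bqX c 2 x * (t - a) * (t - b)"
  shows "bqX c 1 x = - bqX c 2 x * (a + b)"
proof -
  have "bqF c x 0 = bqX c 2 x * a * b" "bqF c x 1 = bqX c 2 x * (1 - a) * (1 - b)"
    using assms by simp_all
  then have "bqX c 1 x + bqX c 2 x * (a + b) = 0"
    by (simp add: bqF_eq_bqX algebra_simps)
  then show ?thesis by (simp add: eq_neg_iff_add_eq_0)
qed

definition bqX_poly :: "(nat \<Rightarrow> nat \<Rightarrow> complex) \<Rightarrow> nat \<Rightarrow> complex poly" where
  "bqX_poly c j = [:c 0 j, c 1 j, c 2 j:]"

lemma poly_bqX_poly [simp]: "poly (bqX_poly c j) x = bqX c j x"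
  unfolding bqX_poly_def bqX_def by (simp add: eval_nat_numeral atMost_Suc algebra_simps)

lemma degree_bqX_poly: "degree (bqX_poly c j) \<le> 2"
  unfolding bqX_poly_def by (simp add: degree_pCons_le)

definition bqF_dy_poly :: "(nat \<Rightarrow> nat \<Rightarrow> complex) \<Rightarrow> complex \<Rightarrow> complex poly" where
  "bqF_dy_poly c w = bqX_poly c 1 + smult (2 * w) (bqX_poly c 2)"

lemma poly_bqF_dy_poly [simp]: "poly (bqF_dy_poly c w) x = bqX c 1 x + 2 * w * bqX c 2 x"
  by (simp add: bqF_dy_poly_def)

lemma degree_bqF_dy_poly: "degree (bqF_dy_poly c w) \<le> 2"
  unfolding bqF_dy_poly_def
  by (intro degree_add_le degree_bqX_poly order.trans[OF degree_smult_le])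

lemma Ddag_linear_comb:
  "Ddag (\<lambda>y. c0 + (\<Sum>k\<in>K. A k * f k y)) a b = (\<Sum>k\<in>K. A k * Ddag (f k) a b)"
  unfolding Ddag_def
  by (simp add: sum_subtractf[symmetric] sum_divide_distrib right_diff_distrib
      flip: sum_negf minus_divide_left)

lemma Mdag_linear_comb:
  "Mdag (\<lambda>y. c0 + (\<Sum>k\<in>K. A k * f k y)) a b = c0 + (\<Sum>k\<in>K. A k * Mdag (f k) a b)"
  unfolding Mdag_def
  by (simp add: sum.distrib[symmetric] sum_divide_distrib distrib_left add_divide_distrib)

lemma Ddag_simple_pole:
  assumes F: "\<forall>t. bqF c x t = bqX c 2 x * (t - a) * (t - b)"
    and "a \<noteq> b" and Fw: "bqF c x w \<noteq> 0"
  shows "Ddag (\<lambda>y. 1 / (y - w)) a b = bqX c 2 x / bqF c x w"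
proof -
  have Fw_eq: "bqF c x w = bqX c 2 x * (w - a) * (w - b)" using F by simp
  then have "bqX c 2 x \<noteq> 0" "w - a \<noteq> 0" "w - b \<noteq> 0" using Fw by auto
  moreover have "Ddag (\<lambda>y. 1 / (y - w)) a b = 1 / ((w - a) * (w - b))"
    using \<open>a \<noteq> b\<close> \<open>w - a \<noteq> 0\<close> \<open>w - b \<noteq> 0\<close> unfolding Ddag_def
    by (simp add: divide_simps) (simp add: algebra_simps)
  ultimately show ?thesis unfolding Fw_eq by simp
qed

lemma Mdag_simple_pole:
  assumes F: "\<forall>t. bqF c x t = bqX c 2 x * (t - a) * (t - b)" and Fw: "bqF c x w \<noteq> 0"
  shows "Mdag (\<lambda>y. 1 / (y - w)) a b = - (bqX c 1 x + 2 * w * bqX c 2 x) / (2 * bqF c x w)"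
proof -
  have Fw_eq: "bqF c x w = bqX c 2 x * (w - a) * (w - b)" using F by simp
  then have "bqX c 2 x \<noteq> 0" "w - a \<noteq> 0" "w - b \<noteq> 0" using Fw by auto
  then show ?thesis
    unfolding Mdag_def Fw_eq bqX_1_eq_root_sum[OF F] by (simp add: divide_simps) algebra
qed

definition pole_denominator :: "(int \<Rightarrow> complex) \<Rightarrow> int \<Rightarrow> nat \<Rightarrow> complex poly" where
  "pole_denominator xs' s m = (\<Prod>k\<le>m. [:- xs' (s + int k), 1:])"

definition pole_cofactor :: "(int \<Rightarrow> complex) \<Rightarrow> int \<Rightarrow> nat \<Rightarrow> nat \<Rightarrow> complex poly" where
  "pole_cofactor xs' s m k = (\<Prod>j\<in>{..m} - {k, Suc k}. [:- xs' (s + int j), 1:])"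

lemma poly_pole_denominator: "poly (pole_denominator xs' s m) x = (\<Prod>k\<le>m. (x - xs' (s + int k)))"
  by (simp add: pole_denominator_def poly_prod)

lemma degree_pole_denominator: "degree (pole_denominator xs' s m) = m + 1"
  by (simp add: pole_denominator_def degree_prod_linear)

lemma degree_pole_cofactor:
  assumes "k < m"
  shows "degree (pole_cofactor xs' s m k) = m - 1"
proof -
  have "card ({..m} - {k, Suc k}) = m - 1"
    using assms by (subst card_Diff_subset) auto
  then show ?thesis by (simp add: pole_cofactor_def degree_prod_linear)
qed

lemma poly_pole_denominator_split:
  assumes "k < m"
  shows "poly (pole_denominator xs' s m) x
           = (x - xs' (s + int k)) * (x - xs' (s + int k + 1)) * poly (pole_cofactor xs' s m k) x"
proof -
  have split: "{..m} = insert k (insert (Suc k) ({..m} - {k, Suc k}))" using assms by auto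
  show ?thesis
    unfolding pole_denominator_def pole_cofactor_def poly_prod
    by (subst split) (simp add: algebra_simps)
qed

lemma bqF_mult_pole_cofactor:
  assumes "elliptic_seq c xs' ys'" and "k < m"
  shows "bqF c x (ys' (s + int k)) * poly (pole_cofactor xs' s m k) x
           = bqY c 2 (ys' (s + int k)) * poly (pole_denominator xs' s m) x"
proof -
  have "bqF c x (ys' (s + int k))
          = bqY c 2 (ys' (s + int k)) * (x - xs' (s + int k)) * (x - xs' (s + int k + 1))"
    using assms(1) unfolding elliptic_seq_def by blast
  then show ?thesis using poly_pole_denominator_split[OF assms(2)] by simp
qed

lemma inverse_bqF_pole:
  assumes ell: "elliptic_seq c xs' ys'" and "k < m"
    and Y2: "bqY c 2 (ys' (s + int k)) \<noteq> 0" and Dn: "poly (pole_denominator xs' s m) x \<noteq> 0"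
  shows "bqF c x (ys' (s + int k)) \<noteq> 0"
    and "1 / bqF c x (ys' (s + int k))
           = poly (pole_cofactor xs' s m k) x / (bqY c 2 (ys' (s + int k)) * poly (pole_denominator xs' s m) x)"
proof -
  have eq: "bqF c x (ys' (s + int k)) * poly (pole_cofactor xs' s m k) x
              = bqY c 2 (ys' (s + int k)) * poly (pole_denominator xs' s m) x"
    using ell \<open>k < m\<close> by (rule bqF_mult_pole_cofactor)
  with Y2 Dn show F0: "bqF c x (ys' (s + int k)) \<noteq> 0" by auto
  from eq Y2 Dn have "poly (pole_cofactor xs' s m k) x \<noteq> 0" by auto
  with eq Y2 Dn F0 show "1 / bqF c x (ys' (s + int k))
          = poly (pole_cofactor xs' s m k) x / (bqY c 2 (ys' (s + int k)) * poly (pole_denominator xs' s m) x)"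
    by (simp add: divide_simps mult.commute)
qed

definition ddag_numerator ::
  "(nat \<Rightarrow> nat \<Rightarrow> complex) \<Rightarrow> (int \<Rightarrow> complex) \<Rightarrow> (int \<Rightarrow> complex) \<Rightarrow> int \<Rightarrow> nat
     \<Rightarrow> (nat \<Rightarrow> complex) \<Rightarrow> complex poly" where
  "ddag_numerator c ys' xs' s m A =
     (\<Sum>k<m. smult (A k / bqY c 2 (ys' (s + int k))) (pole_cofactor xs' s m k))"

definition mdag_numerator ::
  "(nat \<Rightarrow> nat \<Rightarrow> complex) \<Rightarrow> (int \<Rightarrow> complex) \<Rightarrow> (int \<Rightarrow> complex) \<Rightarrow> int \<Rightarrow> nat
     \<Rightarrow> complex \<Rightarrow> (nat \<Rightarrow> complex) \<Rightarrow> complex poly" where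
  "mdag_numerator c ys' xs' s m c0 A =
     smult c0 (pole_denominator xs' s m)
     - (\<Sum>k<m. smult (A k / (2 * bqY c 2 (ys' (s + int k))))
                 (bqF_dy_poly c (ys' (s + int k)) * pole_cofactor xs' s m k))"

lemma degree_ddag_numerator: "degree (ddag_numerator c ys' xs' s m A) \<le> m - 1"
  unfolding ddag_numerator_def
  by (intro degree_sum_le) (auto intro: order.trans[OF degree_smult_le] simp: degree_pole_cofactor)

lemma degree_mdag_numerator: "degree (mdag_numerator c ys' xs' s m c0 A) \<le> m + 1"
proof -
  have "degree (bqF_dy_poly c w * pole_cofactor xs' s m k) \<le> m + 1" if "k < m" for w k
    using degree_mult_le[of "bqF_dy_poly c w" "pole_cofactor xs' s m k"] degree_bqF_dy_poly[of c w]
      degree_pole_cofactor[OF that, of xs' s] that by linarith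
  then show ?thesis
    unfolding mdag_numerator_def
    by (intro degree_diff_le order.trans[OF degree_smult_le] degree_sum_le)
      (auto simp: degree_pole_denominator intro: order.trans[OF degree_smult_le])
qed

lemma Ddag_simple_poles:
  assumes ell: "elliptic_seq c xs' ys'" and Y2: "\<forall>k<m. bqY c 2 (ys' (s + int k)) \<noteq> 0"
    and Dn: "poly (pole_denominator xs' s m) x \<noteq> 0"
    and F: "\<forall>t. bqF c x t = bqX c 2 x * (t - a) * (t - b)" and "a \<noteq> b"
  shows "Ddag (\<lambda>y. c0 + (\<Sum>k<m. A k / (y - ys' (s + int k)))) a b
           = bqX c 2 x * poly (ddag_numerator c ys' xs' s m A) x / poly (pole_denominator xs' s m) x"
proof -
  have "Ddag (\<lambda>y. c0 + (\<Sum>k<m. A k / (y - ys' (s + int k)))) a b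
          = (\<Sum>k<m. A k * Ddag (\<lambda>y. 1 / (y - ys' (s + int k))) a b)"
    using Ddag_linear_comb[of c0 A "\<lambda>k y. 1 / (y - ys' (s + int k))" "{..<m}" a b] by simp
  also have "\<dots> = (\<Sum>k<m. A k * (bqX c 2 x * (1 / bqF c x (ys' (s + int k)))))"
    using Ddag_simple_pole[OF F \<open>a \<noteq> b\<close>] inverse_bqF_pole(1)[OF ell _ _ Dn] Y2 by simp
  also have "\<dots> = bqX c 2 x * poly (ddag_numerator c ys' xs' s m A) x / poly (pole_denominator xs' s m) x"
    using inverse_bqF_pole(2)[OF ell _ _ Dn] Y2
    by (simp add: ddag_numerator_def poly_sum sum_distrib_left sum_divide_distrib mult_ac)
  finally show ?thesis .
qed

lemma Mdag_simple_poles: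
  assumes ell: "elliptic_seq c xs' ys'" and Y2: "\<forall>k<m. bqY c 2 (ys' (s + int k)) \<noteq> 0"
    and Dn: "poly (pole_denominator xs' s m) x \<noteq> 0"
    and F: "\<forall>t. bqF c x t = bqX c 2 x * (t - a) * (t - b)"
  shows "Mdag (\<lambda>y. c0 + (\<Sum>k<m. A k / (y - ys' (s + int k)))) a b
           = poly (mdag_numerator c ys' xs' s m c0 A) x / poly (pole_denominator xs' s m) x"
proof -
  have "Mdag (\<lambda>y. c0 + (\<Sum>k<m. A k / (y - ys' (s + int k)))) a b
          = c0 + (\<Sum>k<m. A k * Mdag (\<lambda>y. 1 / (y - ys' (s + int k))) a b)"
    using Mdag_linear_comb[of c0 A "\<lambda>k y. 1 / (y - ys' (s + int k))" "{..<m}" a b] by simp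
  also have "\<dots> = c0 - (\<Sum>k<m. A k / (2 * bqY c 2 (ys' (s + int k)))
                         * (poly (bqF_dy_poly c (ys' (s + int k))) x * poly (pole_cofactor xs' s m k) x)
                         / poly (pole_denominator xs' s m) x)"
  proof -
    have "A k * Mdag (\<lambda>y. 1 / (y - ys' (s + int k))) a b
            = - (A k / (2 * bqY c 2 (ys' (s + int k)))
                 * (poly (bqF_dy_poly c (ys' (s + int k))) x * poly (pole_cofactor xs' s m k) x)
                 / poly (pole_denominator xs' s m) x)" if "k < m" for k
    proof -
      have "Mdag (\<lambda>y. 1 / (y - ys' (s + int k))) a b
              = - poly (bqF_dy_poly c (ys' (s + int k))) x / 2 * (1 / bqF c x (ys' (s + int k)))"
        using Mdag_simple_pole[OF F] inverse_bqF_pole(1)[OF ell that _ Dn] Y2 that by simp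
      also have "\<dots> = - poly (bqF_dy_poly c (ys' (s + int k))) x / 2 * poly (pole_cofactor xs' s m k) x
                         / (bqY c 2 (ys' (s + int k)) * poly (pole_denominator xs' s m) x)"
        using inverse_bqF_pole(2)[OF ell that _ Dn] Y2 that by simp
      finally have M: "Mdag (\<lambda>y. 1 / (y - ys' (s + int k))) a b = \<dots>" .
      show ?thesis unfolding M using Y2 that Dn by (simp add: field_simps)
    qed
    then show ?thesis by (simp add: sum_negf)
  qed
  also have "\<dots> = poly (mdag_numerator c ys' xs' s m c0 A) x / poly (pole_denominator xs' s m) x"
    using Dn by (simp add: mdag_numerator_def poly_sum diff_divide_distrib sum_divide_distrib)
  finally show ?thesis .
qed

definition Qfun_coeff :: "(int \<Rightarrow> complex) \<Rightarrow> (int \<Rightarrow> complex) \<Rightarrow> nat \<Rightarrow> int \<Rightarrow> int \<Rightarrow> nat \<Rightarrow> complex" where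
  "Qfun_coeff ys ys' m r s = pfrac_coeff (\<lambda>j. ys (r + int j)) (\<lambda>j. ys' (s + int j)) {..<m}"

lemma Qfun_partial_fractions:
  assumes "inj ys'" and "\<forall>k<m. y \<noteq> ys' (s + int k)"
  shows "Qfun ys ys' m r s y = 1 + (\<Sum>k<m. Qfun_coeff ys ys' m r s k / (y - ys' (s + int k)))"
proof -
  have "inj_on (\<lambda>j. ys' (s + int j)) {..<m}"
    using assms(1) by (auto intro!: inj_onI dest: injD)
  then show ?thesis
    unfolding Qfun_def Qfun_coeff_def using assms(2) by (simp add: prod_ratio_partial_fractions)
qed

lemma Qfun_dagger:
  assumes ell: "elliptic_seq c xs' ys'" and Y2: "\<forall>n. bqY c 2 (ys' n) \<noteq> 0" and "inj ys'"
    and Dn: "poly (pole_denominator xs' s m) x \<noteq> 0"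
    and F: "\<forall>t. bqF c x t = bqX c 2 x * (t - a) * (t - b)" and "a \<noteq> b"
  shows "Ddag (Qfun ys ys' m r s) a b
           = bqX c 2 x * poly (ddag_numerator c ys' xs' s m (Qfun_coeff ys ys' m r s)) x
               / poly (pole_denominator xs' s m) x" (is ?Ddag)
    and "Mdag (Qfun ys ys' m r s) a b
           = poly (mdag_numerator c ys' xs' s m 1 (Qfun_coeff ys ys' m r s)) x
               / poly (pole_denominator xs' s m) x" (is ?Mdag)
proof -
  define g where "g y = 1 + (\<Sum>k<m. Qfun_coeff ys ys' m r s k / (y - ys' (s + int k)))" for y
  have "bqF c x (ys' (s + int k)) \<noteq> 0" if "k < m" for k
    using inverse_bqF_pole(1)[OF ell that _ Dn] Y2 by simp
  then have "\<forall>k<m. a \<noteq> ys' (s + int k)" "\<forall>k<m. b \<noteq> ys' (s + int k)"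
    using F by auto
  then have "Qfun ys ys' m r s a = g a" "Qfun ys ys' m r s b = g b"
    unfolding g_def using Qfun_partial_fractions[OF \<open>inj ys'\<close>] by simp_all
  then have "Ddag (Qfun ys ys' m r s) a b = Ddag g a b" "Mdag (Qfun ys ys' m r s) a b = Mdag g a b"
    by (simp_all add: Ddag_def Mdag_def)
  then show ?Ddag and ?Mdag
    unfolding g_def using Ddag_simple_poles[OF ell _ Dn F \<open>a \<noteq> b\<close>] Mdag_simple_poles[OF ell _ Dn F] Y2
    by simp_all
qed

lemma Qfun_numerators_vanish:
  assumes ell: "elliptic_seq c xs ys" and ell': "elliptic_seq c xs' ys'"
    and gp: "general_position c xs ys xs' ys'" and j: "j \<in> {1..<m}"
  shows "poly (ddag_numerator c ys' xs' s m (Qfun_coeff ys ys' m r s)) (xs (r + int j)) = 0" (is ?U)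
    and "poly (mdag_numerator c ys' xs' s m 1 (Qfun_coeff ys ys' m r s)) (xs (r + int j)) = 0" (is ?V)
proof -
  define n where "n = r + int j"
  from gp have "inj ys" "inj ys'" "\<forall>k. xs n \<noteq> xs' k" "bqX c 2 (xs n) \<noteq> 0" "\<forall>k. bqY c 2 (ys' k) \<noteq> 0"
    unfolding general_position_def by auto
  have F: "\<forall>t. bqF c (xs n) t = bqX c 2 (xs n) * (t - ys (n - 1)) * (t - ys n)"
    using ell unfolding elliptic_seq_def by blast
  have "ys (n - 1) \<noteq> ys n" using \<open>inj ys\<close> by (auto dest: injD)
  have Dn: "poly (pole_denominator xs' s m) (xs n) \<noteq> 0"
    using \<open>\<forall>k. xs n \<noteq> xs' k\<close> by (simp add: poly_pole_denominator)
  have "n - 1 = r + int (j - 1)" using j by (auto simp: n_def)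
  then have "Qfun ys ys' m r s (ys (n - 1)) = 0"
    unfolding Qfun_def using j by (auto simp: prod_zero_iff add_diff_eq intro!: bexI[of _ "j - 1"])
  moreover have "Qfun ys ys' m r s (ys n) = 0"
    unfolding Qfun_def n_def using j by (auto simp: prod_zero_iff intro!: bexI[of _ j])
  ultimately have "Ddag (Qfun ys ys' m r s) (ys (n - 1)) (ys n) = 0"
    and "Mdag (Qfun ys ys' m r s) (ys (n - 1)) (ys n) = 0"
    by (simp_all add: Ddag_def Mdag_def)
  with Qfun_dagger[OF ell' \<open>\<forall>k. bqY c 2 (ys' k) \<noteq> 0\<close> \<open>inj ys'\<close> Dn F \<open>ys (n - 1) \<noteq> ys n\<close>]
  show ?U and ?V
    using Dn \<open>bqX c 2 (xs n) \<noteq> 0\<close> by (simp_all add: n_def)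
qed

lemma Qfun_coeff_one: "Qfun_coeff ys ys' 1 r s 0 = ys' s - ys r"
  by (simp add: Qfun_coeff_def pfrac_coeff_def)

lemma ddag_numerator_one: "ddag_numerator c ys' xs' s 1 A = [:A 0 / bqY c 2 (ys' s):]"
  by (simp add: ddag_numerator_def pole_cofactor_def atMost_Suc)

lemma poly_mdag_numerator_one:
  assumes ell: "elliptic_seq c xs' ys'" and Y2: "bqY c 2 (ys' s) \<noteq> 0" and A: "A 0 = ys' s - y"
  shows "poly (mdag_numerator c ys' xs' s 1 1 A) x
           = (bqX c 0 x + (y + ys' s) * bqX c 1 x / 2 + y * ys' s * bqX c 2 x) / bqY c 2 (ys' s)"
proof -
  have "poly (pole_denominator xs' s 1) x = bqF c x (ys' s) / bqY c 2 (ys' s)"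
    using bqF_mult_pole_cofactor[OF ell, of 0 1 x s] Y2 by (simp add: field_simps pole_cofactor_def atMost_Suc)
  then show ?thesis
    using Y2 by (simp add: A mdag_numerator_def pole_cofactor_def atMost_Suc bqF_eq_bqX)
      (simp add: field_simps power2_eq_square)
qed

lemma Qfun_numerators_factor:
  assumes "elliptic_seq c xs ys" and "elliptic_seq c xs' ys'" and gp: "general_position c xs ys xs' ys'"
  obtains C D where
    "ddag_numerator c ys' xs' s m (Qfun_coeff ys ys' m r s) = smult C (\<Prod>k\<in>{1..<m}. [:- xs (r + int k), 1:])"
    "mdag_numerator c ys' xs' s m 1 (Qfun_coeff ys ys' m r s) = (\<Prod>k\<in>{1..<m}. [:- xs (r + int k), 1:]) * D"
    "degree D \<le> 2"
proof -
  define z where "z k = xs (r + int k)" for k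
  have "inj xs" using gp unfolding general_position_def by simp
  then have inj_z: "inj_on z {1..<m}" by (intro inj_onI) (simp add: z_def inj_eq)
  have roots: "\<forall>k\<in>{1..<m}. poly (ddag_numerator c ys' xs' s m (Qfun_coeff ys ys' m r s)) (z k) = 0"
    "\<forall>k\<in>{1..<m}. poly (mdag_numerator c ys' xs' s m 1 (Qfun_coeff ys ys' m r s)) (z k) = 0"
    using Qfun_numerators_vanish[OF assms] by (simp_all add: z_def)
  obtain U where U: "ddag_numerator c ys' xs' s m (Qfun_coeff ys ys' m r s) = (\<Prod>k\<in>{1..<m}. [:- z k, 1:]) * U"
    "degree U = degree (ddag_numerator c ys' xs' s m (Qfun_coeff ys ys' m r s)) - (m - 1)"
    using prod_linear_factor[OF _ inj_z roots(1)] by auto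
  obtain D where D: "mdag_numerator c ys' xs' s m 1 (Qfun_coeff ys ys' m r s) = (\<Prod>k\<in>{1..<m}. [:- z k, 1:]) * D"
    "degree D = degree (mdag_numerator c ys' xs' s m 1 (Qfun_coeff ys ys' m r s)) - (m - 1)"
    using prod_linear_factor[OF _ inj_z roots(2)] by auto
  have "degree U = 0" using U(2) degree_ddag_numerator[of c ys' xs' s m] by simp
  then obtain C where "U = [:C:]" by (rule degree_eq_zeroE)
  moreover have "degree D \<le> 2"
    using D(2) degree_mdag_numerator[of c ys' xs' s m 1 "Qfun_coeff ys ys' m r s"] by arith
  ultimately show thesis
    using that[of C D] U(1) D(1) by (simp add: z_def)
qed

theorem mainTheorem15:
  fixes c :: "nat \<Rightarrow> nat \<Rightarrow> complex"
    and xs ys xs' ys' :: "int \<Rightarrow> complex"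
  assumes "elliptic_seq c xs ys"
    and "elliptic_seq c xs' ys'"
    and "general_position c xs ys xs' ys'"
    and "m \<ge> 1"
  shows "\<exists>(C::complex) (D::complex poly).
     degree D \<le> 2 \<and>
     (m = 1 \<longrightarrow>
        C = (ys' s - ys r) / bqY c 2 (ys' s) \<and>
        (\<forall>x. poly D x = (bqX c 0 x + (ys r + ys' s) * bqX c 1 x / 2 + ys r * ys' s * bqX c 2 x)
                         / bqY c 2 (ys' s))) \<and>
     (\<exists>S. finite S \<and>
        (\<forall>x. x \<notin> S \<longrightarrow> (\<forall>yp ym. yp \<noteq> ym \<longrightarrow>
            (\<forall>t. bqF c x t = bqX c 2 x * (t - yp) * (t - ym)) \<longrightarrow>
            Ddag (Qfun ys ys' m r s) yp ym
              = C * bqX c 2 x * (\<Prod>k\<in>{1..<m}. (x - xs (r + int k)))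
                  / (\<Prod>k\<le>m. (x - xs' (s + int k))) \<and>
            Mdag (Qfun ys ys' m r s) yp ym
              = poly D x * (\<Prod>k\<in>{1..<m}. (x - xs (r + int k)))
                  / (\<Prod>k\<le>m. (x - xs' (s + int k))))))"
proof -
  from assms(3) have Y2: "\<forall>n. bqY c 2 (ys' n) \<noteq> 0" and "inj ys'"
    unfolding general_position_def by auto
  obtain C D where "degree D \<le> 2"
    and U: "ddag_numerator c ys' xs' s m (Qfun_coeff ys ys' m r s) = smult C (\<Prod>k\<in>{1..<m}. [:- xs (r + int k), 1:])"
    and V: "mdag_numerator c ys' xs' s m 1 (Qfun_coeff ys ys' m r s) = (\<Prod>k\<in>{1..<m}. [:- xs (r + int k), 1:]) * D"
    using Qfun_numerators_factor[OF assms(1-3)] by metis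
  have "C = (ys' s - ys r) / bqY c 2 (ys' s) \<and>
        (\<forall>x. poly D x = (bqX c 0 x + (ys r + ys' s) * bqX c 1 x / 2 + ys r * ys' s * bqX c 2 x)
                         / bqY c 2 (ys' s))" if "m = 1"
  proof -
    have A0: "Qfun_coeff ys ys' 1 r s 0 = ys' s - ys r" by (rule Qfun_coeff_one)
    have "smult C 1 = [:Qfun_coeff ys ys' 1 r s 0 / bqY c 2 (ys' s):]"
      using U unfolding that ddag_numerator_one by simp
    moreover have "poly D x = (bqX c 0 x + (ys r + ys' s) * bqX c 1 x / 2 + ys r * ys' s * bqX c 2 x)
                               / bqY c 2 (ys' s)" for x
      using V poly_mdag_numerator_one[of c xs' ys' s "Qfun_coeff ys ys' 1 r s" "ys r",
          OF assms(2) Y2[rule_format] A0]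
      unfolding that by simp
    ultimately show ?thesis using A0 by simp
  qed
  moreover have "Ddag (Qfun ys ys' m r s) yp ym
              = C * bqX c 2 x * (\<Prod>k\<in>{1..<m}. (x - xs (r + int k))) / (\<Prod>k\<le>m. (x - xs' (s + int k)))
         \<and> Mdag (Qfun ys ys' m r s) yp ym
              = poly D x * (\<Prod>k\<in>{1..<m}. (x - xs (r + int k))) / (\<Prod>k\<le>m. (x - xs' (s + int k)))"
    if "x \<notin> (\<lambda>k. xs' (s + int k)) ` {..m}" and "yp \<noteq> ym"
      and F: "\<forall>t. bqF c x t = bqX c 2 x * (t - yp) * (t - ym)" for x yp ym
  proof -
    have "poly (pole_denominator xs' s m) x \<noteq> 0" using that(1) by (auto simp: poly_pole_denominator)
    then show ?thesis
      using Qfun_dagger[OF assms(2) Y2 \<open>inj ys'\<close> _ F \<open>yp \<noteq> ym\<close>] U V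
      by (simp add: poly_prod poly_pole_denominator mult_ac)
  qed
  ultimately show ?thesis
    using \<open>degree D \<le> 2\<close>
    by (intro exI[of _ C] exI[of _ D] conjI impI exI[of _ "(\<lambda>k. xs' (s + int k)) ` {..m}"] allI)
      simp_all
qed

end
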